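(* Failure links and pops can be computed as follows. If $v\in\{r,r_\sharp\}$, then $f(v)=\mathrm{null}$ and $F(v)=[\,]$. Otherwise, let $u$ be the parent of $v$ and $c$ the edge label with $\delta(u,c)=v$; then $$(f(v),F(v)) = \begin{cases}(r_\sharp,\,[\chi_v]) & \text{if } \chi_v\in V,\\ \big(h(f(u),c),\; F(u)+H(f(u),c)\big) & \text{otherwise.}\end{cases}$$
   Context: Setting: WordPiece tokenization with vocabulary $V$, suffix indicator string $\sharp$ (e.g. "##", possibly empty). A trie is built from $V$ with root $r$ and node $r_\sharp$ representing $\sharp$; it may be augmented with nodes for $\sqcup$ and $\sharp\sqcup$, where $\sqcup$ is a whitespace character not in the vocabulary alphabet (not added to $V$). $\delta(u,c)$ is the child of $u$ along edge $c$, or null. $\chi_v$ is the string of node $v$; $\gamma_w$ is the node representing $w$, or null. Length of $w$: $|w|$ if $w$ does not start with $\sharp$, else $|w|-|\sharp|$. $p_w$: longest (by this length) non-empty prefix $w'\in V$, $w'\notin\{\varepsilon,\sharp\}$, of $w$, required to start with $\sharp$ if $w$ does; $p_w=\varepsilon$ if none, and $p_\sharp=\varepsilon$. $q_w:=\sharp w''$ where $w=p_w w''$. MinPop Matching: $(g(w),G(w)) := (\gamma_w,[\,])$ if $\gamma_w\neq\mathrm{null}$; else $(\mathrm{null},[\,])$ if $p_w=\varepsilon$; else $(g(q_w),[p_w]+G(q_w))$. One-step: $(h(u,c),H(u,c)) := (\mathrm{null},[\,])$ if $u=\mathrm{null}$, else $(g(\chi_u c),G(\chi_u c))$. Failure link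 and failure pops of node $v$, with $w=\chi_v$: $(f(v),F(v)) := (\mathrm{null},[\,])$ if $p_w=\varepsilon$, else $(g(q_w),\,[p_w]+G(q_w))$. *)

theory Defs
  imports "HOL-Library.Sublist"
begin

text \<open>Strings are lists over an alphabet 'a. The suffix indicator is s (possibly []).
 Trie nodes are identified with the strings they represent (chi_v = v); null = None.\<close>

definition slen :: "'a list \<Rightarrow> 'a list \<Rightarrow> nat" where
  "slen s w = (if prefix s w then length w - length s else length w)"

definition pcand :: "'a list set \<Rightarrow> 'a list \<Rightarrow> 'a list \<Rightarrow> 'a list \<Rightarrow> bool" where
  "pcand V s w w' \<longleftrightarrow> prefix w' w \<and> w' \<in> V \<and> w' \<noteq> [] \<and> w' \<noteq> s \<and> (prefix s w \<longrightarrow> prefix s w')"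

definition pw :: "'a list set \<Rightarrow> 'a list \<Rightarrow> 'a list \<Rightarrow> 'a list" where
  "pw V s w = (if \<exists>w'. pcand V s w w' then (ARG_MAX (slen s) w'. pcand V s w w') else [])"

definition qw :: "'a list set \<Rightarrow> 'a list \<Rightarrow> 'a list \<Rightarrow> 'a list" where
  "qw V s w = s @ drop (length (pw V s w)) w"

lemma pw_cand: "pw V s w \<noteq> [] \<Longrightarrow> pcand V s w (pw V s w)"
proof -
  assume "pw V s w \<noteq> []"
  then obtain k where k: "pcand V s w k" unfolding pw_def by (auto split: if_splits)
  have "\<forall>y. pcand V s w y \<longrightarrow> slen s y < length w + 1"
    by (auto simp: pcand_def slen_def dest: prefix_length_le)
  from arg_max_natI[OF k this] k show ?thesis unfolding pw_def by auto
qed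

lemma qw_dec: "pw V s w \<noteq> [] \<Longrightarrow> slen s (qw V s w) < slen s w"
proof -
  assume a: "pw V s w \<noteq> []"
  have c: "pcand V s w (pw V s w)" using pw_cand[OF a] .
  then have pre: "prefix (pw V s w) w" and ne: "pw V s w \<noteq> []" "pw V s w \<noteq> s"
    by (auto simp: pcand_def)
  have lw: "length (pw V s w) \<le> length w" using pre prefix_length_le by blast
  show ?thesis
  proof (cases "prefix s w")
    case True
    then have "prefix s (pw V s w)" using c by (auto simp: pcand_def)
    with ne have "length s < length (pw V s w)"
      by (intro prefix_length_less) (simp add: strict_prefix_def)
    then show ?thesis using True lw by (simp add: slen_def qw_def)
  next
    case False
    have "0 < length (pw V s w)" using ne by simp
    then have "length w - length (pw V s w) < length w" using lw by linarith
    then show ?thesis using False by (simp add: slen_def qw_def)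
  qed
qed

function minpop :: "'a list set \<Rightarrow> 'a list \<Rightarrow> 'a list set \<Rightarrow> 'a list \<Rightarrow> 'a list option \<times> 'a list list" where
  "minpop V s N w =
     (if w \<in> N then (Some w, [])
      else if pw V s w = [] then (None, [])
      else (let r = minpop V s N (qw V s w) in (fst r, pw V s w # snd r)))"
  by pat_completeness auto
termination
  by (relation "measure (\<lambda>(V, s, N, w). slen s w)") (simp_all add: qw_dec)

declare minpop.simps[simp del]

definition trie :: "'a list set \<Rightarrow> 'a list \<Rightarrow> 'a \<Rightarrow> bool \<Rightarrow> 'a list set" where
  "trie V s ws aug = {x. \<exists>w \<in> V \<union> {s} \<union> (if aug then {[ws], s @ [ws]} else {}). prefix x w}"

definition delta :: "'a list set \<Rightarrow> 'a list \<Rightarrow> 'a \<Rightarrow> 'a list option" where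
  "delta N u c = (if u @ [c] \<in> N then Some (u @ [c]) else None)"

definition onestep :: "'a list set \<Rightarrow> 'a list \<Rightarrow> 'a list set \<Rightarrow> 'a list option \<Rightarrow> 'a \<Rightarrow> 'a list option \<times> 'a list list" where
  "onestep V s N u c = (case u of None \<Rightarrow> (None, []) | Some x \<Rightarrow> minpop V s N (x @ [c]))"

definition failure :: "'a list set \<Rightarrow> 'a list \<Rightarrow> 'a list set \<Rightarrow> 'a list \<Rightarrow> 'a list option \<times> 'a list list" where
  "failure V s N v = (if pw V s v = [] then (None, [])
     else (let r = minpop V s N (qw V s v) in (fst r, pw V s v # snd r)))"

end

theory Submission
  imports Defs
begin

text \<open>If w c is neither in V nor the suffix indicator s, then w and w c have the same candidate
  prefixes, so p(w c) = p(w) and q(w c) = q(w) c. Following the MinPop recursion, for w outside the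
  prefix-closed trie the matching of w c is therefore the matching of w followed by one step on c;
  applied to q(u) this gives the recurrence for a node u c not in V. A node v in V is its own
  longest candidate prefix, so q(v) = s and the failure link is s with the single pop v.\<close>

lemma trie_prefix_closed: "prefix x y \<Longrightarrow> y \<in> trie V s ws aug \<Longrightarrow> x \<in> trie V s ws aug"
  unfolding trie_def using prefix_order.trans by blast

lemma vocab_subset_trie: "V \<subseteq> trie V s ws aug"
  and suffix_indicator_in_trie: "s \<in> trie V s ws aug"
  unfolding trie_def by auto

lemma slen_strict_prefix_less:
  assumes "strict_prefix y w" and "prefix s w \<longrightarrow> prefix s y"
  shows "slen s y < slen s w"
proof (cases "prefix s w")
  case True
  with assms have "prefix s y" by simp
  have "length s \<le> length y" using \<open>prefix s y\<close> by (rule prefix_length_le)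
  moreover have "length y < length w" using assms(1) by (rule prefix_length_less)
  ultimately show ?thesis using True \<open>prefix s y\<close> by (simp add: slen_def)
next
  case False
  have "\<not> prefix s y" using False assms(1) prefix_order.trans strict_prefix_def by blast
  moreover have "length y < length w" using assms(1) by (rule prefix_length_less)
  ultimately show ?thesis using False by (simp add: slen_def)
qed

lemma pcand_less_self:
  assumes "pcand V s w y" and "y \<noteq> w"
  shows "slen s y < slen s w"
  using assms by (intro slen_strict_prefix_less) (auto simp: pcand_def)

lemma pw_self:
  assumes "pcand V s w w"
  shows "pw V s w = w"
proof -
  have "(ARG_MAX (slen s) y. pcand V s w y) = w"
  proof (rule arg_maxI[of "pcand V s w" w])
    fix y assume "pcand V s w y"
    then show "\<not> slen s w < slen s y" using pcand_less_self[of V s w y] by fastforce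
  next
    fix x assume "pcand V s w x" and "\<forall>y. pcand V s w y \<longrightarrow> \<not> slen s x < slen s y"
    then show "x = w" using assms pcand_less_self by blast
  qed (fact assms)
  then show ?thesis using assms by (auto simp: pw_def)
qed

lemma pw_Nil: "pw V s [] = []"
  using pw_cand by (fastforce simp: pcand_def)

lemma pw_suffix_indicator: "pw V s s = []"
  using pw_cand by (fastforce simp: pcand_def prefix_order.antisym)

lemma pcand_snoc:
  assumes "w @ [c] \<notin> V" and "w @ [c] \<noteq> s"
  shows "pcand V s (w @ [c]) = pcand V s w"
proof
  fix x
  have "prefix s (w @ [c]) \<longleftrightarrow> prefix s w" using assms(2) by auto
  then show "pcand V s (w @ [c]) x = pcand V s w x"
    using assms by (auto simp: pcand_def)
qed

lemma pw_snoc: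
  assumes "w @ [c] \<notin> V" and "w @ [c] \<noteq> s"
  shows "pw V s (w @ [c]) = pw V s w"
  unfolding pw_def pcand_snoc[OF assms] ..

lemma qw_snoc:
  assumes "w @ [c] \<notin> V" and "w @ [c] \<noteq> s" and "pw V s w \<noteq> []"
  shows "qw V s (w @ [c]) = qw V s w @ [c]"
proof -
  have "prefix (pw V s w) w" using pw_cand[OF assms(3)] by (simp add: pcand_def)
  then have "length (pw V s w) \<le> length w" by (rule prefix_length_le)
  then show ?thesis using pw_snoc[OF assms(1,2)] by (simp add: qw_def)
qed

lemma minpop_node: "w \<in> N \<Longrightarrow> minpop V s N w = (Some w, [])"
  by (subst minpop.simps) simp

lemma minpop_non_node:
  "w \<notin> N \<Longrightarrow> pw V s w \<noteq> [] \<Longrightarrow>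
    minpop V s N w = (fst (minpop V s N (qw V s w)), pw V s w # snd (minpop V s N (qw V s w)))"
  by (simp add: minpop.simps[of V s N w] Let_def)

lemma failure_non_empty_pw:
  "pw V s w \<noteq> [] \<Longrightarrow>
    failure V s N w = (fst (minpop V s N (qw V s w)), pw V s w # snd (minpop V s N (qw V s w)))"
  by (simp add: failure_def Let_def)

lemma minpop_snoc:
  assumes prefix_closed: "\<And>x y. prefix x y \<Longrightarrow> y \<in> N \<Longrightarrow> x \<in> N"
    and "V \<subseteq> N" and "s \<in> N"
  shows "minpop V s N (w @ [c]) =
    (fst (onestep V s N (fst (minpop V s N w)) c),
     snd (minpop V s N w) @ snd (onestep V s N (fst (minpop V s N w)) c))"
proof (induction w rule: measure_induct_rule[of "slen s"])
  case (less w)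
  show ?case
  proof (cases "w \<in> N")
    case True
    then show ?thesis by (simp add: minpop_node onestep_def)
  next
    case False
    then have "w @ [c] \<notin> N" using prefix_closed[of w "w @ [c]"] by auto
    then have nV: "w @ [c] \<notin> V" and ns: "w @ [c] \<noteq> s" using assms(2,3) by auto
    show ?thesis
    proof (cases "pw V s w = []")
      case True
      with False \<open>w @ [c] \<notin> N\<close> show ?thesis
        by (simp add: minpop.simps[of V s N w] minpop.simps[of V s N "w @ [c]"] pw_snoc[OF nV ns]
            onestep_def)
    next
      case False
      with \<open>w \<notin> N\<close> \<open>w @ [c] \<notin> N\<close> show ?thesis
        using less[OF qw_dec[OF False]]
        by (simp add: minpop_non_node pw_snoc[OF nV ns] qw_snoc[OF nV ns False])
    qed
  qed
qed

lemma failure_snoc: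
  assumes "\<And>x y. prefix x y \<Longrightarrow> y \<in> N \<Longrightarrow> x \<in> N" and "V \<subseteq> N" and "s \<in> N"
    and nV: "u @ [c] \<notin> V" and ns: "u @ [c] \<noteq> s"
  shows "failure V s N (u @ [c]) =
    (fst (onestep V s N (fst (failure V s N u)) c),
     snd (failure V s N u) @ snd (onestep V s N (fst (failure V s N u)) c))"
proof (cases "pw V s u = []")
  case True
  then show ?thesis by (simp add: failure_def pw_snoc[OF nV ns] onestep_def)
next
  case False
  then show ?thesis
    by (simp add: failure_non_empty_pw pw_snoc[OF nV ns] qw_snoc[OF nV ns False]
        minpop_snoc[OF assms(1-3)])
qed

lemma failure_vocab:
  assumes "v \<in> V" and "v \<noteq> []" and "v \<noteq> s" and "s \<in> N"
  shows "failure V s N v = (Some s, [v])"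
proof -
  have "pw V s v = v" using assms by (intro pw_self) (simp add: pcand_def)
  then have "qw V s v = s" by (simp add: qw_def)
  with \<open>pw V s v = v\<close> assms show ?thesis by (simp add: failure_non_empty_pw minpop_node)
qed

theorem lemma5:
  fixes V :: "'a list set" and s :: "'a list" and ws :: 'a and aug :: bool and v :: "'a list"
  defines "N \<equiv> trie V s ws aug"
  assumes ws_V: "\<forall>w\<in>V. ws \<notin> set w"
    and ws_s: "ws \<notin> set s"
    and v_node: "v \<in> N"
  shows "((v = [] \<or> v = s) \<longrightarrow> failure V s N v = (None, [])) \<and>
         (\<forall>u c. v \<noteq> [] \<and> v \<noteq> s \<and> u \<in> N \<and> delta N u c = Some v \<longrightarrow>
           failure V s N v =
             (if v \<in> V then (Some s, [v])
              else (fst (onestep V s N (fst (failure V s N u)) c),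
                    snd (failure V s N u) @ snd (onestep V s N (fst (failure V s N u)) c))))"
proof (intro conjI impI allI)
  assume "v = [] \<or> v = s"
  then show "failure V s N v = (None, [])"
    by (auto simp: failure_def pw_Nil pw_suffix_indicator)
next
  fix u c
  assume v: "v \<noteq> [] \<and> v \<noteq> s \<and> u \<in> N \<and> delta N u c = Some v"
  then have "v = u @ [c]" by (simp add: delta_def split: if_splits)
  with v show "failure V s N v = (if v \<in> V then (Some s, [v])
              else (fst (onestep V s N (fst (failure V s N u)) c),
                    snd (failure V s N u) @ snd (onestep V s N (fst (failure V s N u)) c)))"
    unfolding N_def
    by (simp add: failure_vocab failure_snoc trie_prefix_closed vocab_subset_trie
        suffix_indicator_in_trie)
qed

end
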